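(* Let $\mathcal X=\mathcal X_1\times\cdots\times\mathcal X_b$, $\mathcal X_i=\mathbb R^{m_i\times n_i}$ with trace inner product and arbitrary norms $\|\cdot\|_{(i)}$ (dual norms $\|\cdot\|_{(i)\star}$). Let $f:\mathcal X\to\mathbb R$ be continuously differentiable with $f\ge f^\star$ for some $f^\star\in\mathbb R$. Let $\mathcal D$ be an arbitrary probability distribution on subsets of $[b]$, and assume there are constants $L^0_{i,S}\ge0$ ($S\in\operatorname{supp}(\mathcal D)$), with $L^0_{i,S}=0$ for $i\notin S$, such that for every $S\in\operatorname{supp}(\mathcal D)$, $X\in\mathcal X$ and $\Gamma\in\mathcal X$ with $\Gamma_i=0$ for $i\notin S$, $$f(X+\Gamma)-f(X)-\langle\nabla f(X),\Gamma\rangle\le\sum_{i\in S}\frac{L^0_{i,S}}2\|\Gamma_i\|_{(i)}^2.$$ From $X^0$, for $k=0,1,\dots$ draw $S^k\sim\mathcal D$ i.i.d., set $X_i^{k+1}=X_i^k-\gamma_i^k(\nabla_if(X^k))^\sharp$ for $i\in S^k$ and $X_i^{k+1}=X_i^k$ otherwise, with $\gamma_i^k=1/L^0_{i,S^k}$. Then for every $K\ge1$, $$\frac1K\sum_{k=0}^{K-1}\sum_{i=1}^b\frac{w_i}{\frac1b\sum_{j=1}^bw_j}\mathbb E\big[\|\nabla_if(X^k)\|_{(i)\star}^2\big]\le\frac{f(X^0)-f^\star}{K\left(\frac1b\sum_{j=1}^bw_j\right)},\qquad w_i:=\mathbb E\left[\frac{\mathbb 1\{i\in\hat S\}}{2L^0_{i,\hat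 S}}\right],$$ where $\hat S\sim\mathcal D$.
   Context: $\operatorname{supp}(\mathcal D)$ is the collection of subsets of $[b]$ with positive probability. For $G\in\mathcal X_i$, $G^\sharp$ is an element of $\arg\max_Z\{\langle G,Z\rangle-\frac12\|Z\|_{(i)}^2\}$. In $w_i$ the integrand is understood to be $0$ when $i\notin\hat S$. *)

theory Defs
  imports "HOL-Analysis.Analysis" "HOL-Probability.Probability"
begin

text \<open>A point X of the product space is a function i r c giving entry (r,c) of
block i (blocks i = 1..b, block i is an m i by n i real matrix). Entries
outside the index ranges are 0.\<close>

type_synonym blockmat = "nat \<Rightarrow> nat \<Rightarrow> real"
type_synonym point = "nat \<Rightarrow> blockmat"

definition blk :: "nat \<Rightarrow> nat \<Rightarrow> blockmat set" where
  "blk m n = {A. \<forall>r c. (m \<le> r \<or> n \<le> c) \<longrightarrow> A r c = 0}"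

definition Xspace :: "nat \<Rightarrow> (nat \<Rightarrow> nat) \<Rightarrow> (nat \<Rightarrow> nat) \<Rightarrow> point set" where
  "Xspace b m n = {X. \<forall>i. (i \<in> {1..b} \<longrightarrow> X i \<in> blk (m i) (n i)) \<and> (i \<notin> {1..b} \<longrightarrow> X i = (\<lambda>r c. 0))}"

definition blk_inner :: "nat \<Rightarrow> nat \<Rightarrow> blockmat \<Rightarrow> blockmat \<Rightarrow> real" where
  "blk_inner m n A B = (\<Sum>r<m. \<Sum>c<n. A r c * B r c)"

definition X_inner :: "nat \<Rightarrow> (nat \<Rightarrow> nat) \<Rightarrow> (nat \<Rightarrow> nat) \<Rightarrow> point \<Rightarrow> point \<Rightarrow> real" where
  "X_inner b m n X Y = (\<Sum>i\<in>{1..b}. blk_inner (m i) (n i) (X i) (Y i))"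

definition X_fro :: "nat \<Rightarrow> (nat \<Rightarrow> nat) \<Rightarrow> (nat \<Rightarrow> nat) \<Rightarrow> point \<Rightarrow> real" where
  "X_fro b m n X = sqrt (X_inner b m n X X)"

definition X_add :: "point \<Rightarrow> point \<Rightarrow> point" where
  "X_add X Y = (\<lambda>i r c. X i r c + Y i r c)"

definition X_diff :: "point \<Rightarrow> point \<Rightarrow> point" where
  "X_diff X Y = (\<lambda>i r c. X i r c - Y i r c)"

definition norm_on :: "blockmat set \<Rightarrow> (blockmat \<Rightarrow> real) \<Rightarrow> bool" where
  "norm_on B N \<longleftrightarrow>
     (\<forall>x\<in>B. 0 \<le> N x) \<and>
     (\<forall>x\<in>B. N x = 0 \<longleftrightarrow> x = (\<lambda>r c. 0)) \<and>
     (\<forall>x\<in>B. \<forall>a. N (\<lambda>r c. a * x r c) = \<bar>a\<bar> * N x) \<and>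
     (\<forall>x\<in>B. \<forall>y\<in>B. N (\<lambda>r c. x r c + y r c) \<le> N x + N y)"

definition dual_norm :: "nat \<Rightarrow> nat \<Rightarrow> (blockmat \<Rightarrow> real) \<Rightarrow> blockmat \<Rightarrow> real" where
  "dual_norm m n N G = Sup {blk_inner m n G Z | Z. Z \<in> blk m n \<and> N Z \<le> 1}"

definition has_grad :: "nat \<Rightarrow> (nat \<Rightarrow> nat) \<Rightarrow> (nat \<Rightarrow> nat) \<Rightarrow> (point \<Rightarrow> real) \<Rightarrow> point \<Rightarrow> point \<Rightarrow> bool" where
  "has_grad b m n f G X \<longleftrightarrow> G \<in> Xspace b m n \<and>
     (\<forall>e>0. \<exists>d>0. \<forall>H\<in>Xspace b m n. X_fro b m n H < d \<longrightarrow>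
        \<bar>f (X_add X H) - f X - X_inner b m n G H\<bar> \<le> e * X_fro b m n H)"

definition continuous_grad :: "nat \<Rightarrow> (nat \<Rightarrow> nat) \<Rightarrow> (nat \<Rightarrow> nat) \<Rightarrow> (point \<Rightarrow> point) \<Rightarrow> bool" where
  "continuous_grad b m n g \<longleftrightarrow> (\<forall>X\<in>Xspace b m n. \<forall>e>0. \<exists>d>0. \<forall>Y\<in>Xspace b m n.
      X_fro b m n (X_diff Y X) < d \<longrightarrow> X_fro b m n (X_diff (g Y) (g X)) < e)"

definition rcd_step :: "(point \<Rightarrow> point) \<Rightarrow> (nat \<Rightarrow> blockmat \<Rightarrow> blockmat) \<Rightarrow> (nat \<Rightarrow> nat set \<Rightarrow> real)
    \<Rightarrow> nat set \<Rightarrow> point \<Rightarrow> point" where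
  "rcd_step g sharp L0 S X = (\<lambda>i. if i \<in> S
       then (\<lambda>r c. X i r c - (1 / L0 i S) * sharp i (g X i) r c) else X i)"

primrec rcd_iter :: "(point \<Rightarrow> point) \<Rightarrow> (nat \<Rightarrow> blockmat \<Rightarrow> blockmat) \<Rightarrow> (nat \<Rightarrow> nat set \<Rightarrow> real)
    \<Rightarrow> point \<Rightarrow> (nat \<Rightarrow> nat set) \<Rightarrow> nat \<Rightarrow> point" where
  "rcd_iter g sharp L0 X0 Ss 0 = X0"
| "rcd_iter g sharp L0 X0 Ss (Suc k) = rcd_step g sharp L0 (Ss k) (rcd_iter g sharp L0 X0 Ss k)"

end

theory Submission
  imports Defs
begin

text \<open>A step with sample \<open>S\<close> moves each block \<open>i \<in> S\<close> by \<open>-(1 / L0 i S)\<close> times the sharp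
  of its partial gradient \<open>G\<close>. By the smoothness inequality, the resulting change of \<open>f\<close> is at
  most \<open>-(1 / L0 i S)\<close> times the optimal value of \<open>\<langle>G, Z\<rangle> - \<parallel>Z\<parallel>\<^sup>2 / 2\<close>, summed over \<open>i \<in> S\<close>;
  testing that problem against \<open>\<langle>G, Z\<rangle> Z\<close> for \<open>\<parallel>Z\<parallel> \<le> 1\<close> shows the value is at least
  \<open>\<parallel>G\<parallel>\<^sub>*\<^sup>2 / 2\<close>. The sample \<open>S\<^sup>k\<close> is independent of the iterate \<open>X\<^sup>k\<close>, so averaging over it
  gives \<open>E f(X\<^sup>k\<^sup>+\<^sup>1) \<le> E f(X\<^sup>k) - \<Sum>\<^sub>i w\<^sub>i E \<parallel>\<nabla>\<^sub>i f(X\<^sup>k)\<parallel>\<^sub>*\<^sup>2\<close>; telescoping and \<open>f \<ge> f\<^sup>\<star>\<close>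
  give the bound.\<close>

lemma expectation_mono_finite:
  fixes f g :: "'a \<Rightarrow> real"
  assumes "finite (set_pmf M)" "\<And>x. x \<in> set_pmf M \<Longrightarrow> f x \<le> g x"
  shows "measure_pmf.expectation M f \<le> measure_pmf.expectation M g"
  using assms by (intro integral_mono_AE) (auto simp: AE_measure_pmf_iff intro: integrable_measure_pmf_finite)

lemma expectation_pair_pmf_finite:
  fixes h :: "'a \<times> 'b \<Rightarrow> real"
  assumes "finite (set_pmf p)" "finite (set_pmf q)"
  shows "measure_pmf.expectation (pair_pmf p q) h
       = measure_pmf.expectation q (\<lambda>y. measure_pmf.expectation p (\<lambda>x. h (x, y)))"
proof -
  have "measure_pmf.expectation (pair_pmf p q) h
      = (\<Sum>z\<in>set_pmf p \<times> set_pmf q. h z * pmf (pair_pmf p q) z)"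
    using assms by (intro integral_measure_pmf_real) auto
  also have "\<dots> = (\<Sum>x\<in>set_pmf p. \<Sum>y\<in>set_pmf q. h (x, y) * pmf p x * pmf q y)"
    by (simp add: sum.cartesian_product mult.assoc case_prod_beta' pmf_pair[symmetric])
  also have "\<dots> = (\<Sum>y\<in>set_pmf q. (\<Sum>x\<in>set_pmf p. h (x, y) * pmf p x) * pmf q y)"
    by (subst sum.swap) (simp add: sum_distrib_right)
  also have "\<dots> = (\<Sum>y\<in>set_pmf q. measure_pmf.expectation p (\<lambda>x. h (x, y)) * pmf q y)"
    using assms by (simp add: integral_measure_pmf_real)
  also have "\<dots> = measure_pmf.expectation q (\<lambda>y. measure_pmf.expectation p (\<lambda>x. h (x, y)))"
    using assms by (simp add: integral_measure_pmf_real)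
  finally show ?thesis .
qed

lemma finite_set_Pi_pmf:
  assumes "finite A" "\<And>x. x \<in> A \<Longrightarrow> finite (set_pmf (p x))"
  shows "finite (set_pmf (Pi_pmf A dflt p))"
  using assms by (simp add: set_Pi_pmf finite_PiE_dflt)

lemma set_Pi_pmf_component:
  assumes "finite A" "Ss \<in> set_pmf (Pi_pmf A dflt p)" "j \<in> A"
  shows "Ss j \<in> set_pmf (p j)"
  using assms by (auto simp: set_Pi_pmf PiE_dflt_def)

lemma expectation_Pi_pmf_lessThan_Suc:
  fixes h :: "(nat \<Rightarrow> 'a) \<Rightarrow> real"
  assumes "finite (set_pmf D)"
  shows "measure_pmf.expectation (Pi_pmf {..<Suc k} dflt (\<lambda>_. D)) h
       = measure_pmf.expectation (Pi_pmf {..<k} dflt (\<lambda>_. D))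
           (\<lambda>Ss. measure_pmf.expectation D (\<lambda>y. h (Ss(k := y))))"
proof -
  have "Pi_pmf {..<Suc k} dflt (\<lambda>_. D)
      = map_pmf (\<lambda>(y, Ss). Ss(k := y)) (pair_pmf D (Pi_pmf {..<k} dflt (\<lambda>_. D)))"
    by (simp add: lessThan_Suc Pi_pmf_insert)
  then show ?thesis
    using assms by (simp add: case_prod_beta expectation_pair_pmf_finite finite_set_Pi_pmf)
qed

lemma blk_zero: "(\<lambda>r c. 0) \<in> blk m n"
  by (simp add: blk_def)

lemma blk_scale: "Z \<in> blk m n \<Longrightarrow> (\<lambda>r c. a * Z r c) \<in> blk m n"
  by (simp add: blk_def)

lemma blk_inner_zero: "blk_inner m n G (\<lambda>r c. 0) = 0"
  by (simp add: blk_inner_def)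

lemma blk_inner_scale: "blk_inner m n G (\<lambda>r c. a * Z r c) = a * blk_inner m n G Z"
  by (simp add: blk_inner_def sum_distrib_left mult_ac)

lemma dual_norm_sq_le_sharp_value:
  assumes N: "norm_on (blk m n) N" and s: "s \<in> blk m n"
    and opt: "\<forall>Z\<in>blk m n. blk_inner m n G Z - (N Z)\<^sup>2 / 2 \<le> blk_inner m n G s - (N s)\<^sup>2 / 2"
  shows "(dual_norm m n N G)\<^sup>2 \<le> 2 * (blk_inner m n G s - (N s)\<^sup>2 / 2)"
proof -
  define C where "C = blk_inner m n G s - (N s)\<^sup>2 / 2"
  define A where "A = {blk_inner m n G Z | Z. Z \<in> blk m n \<and> N Z \<le> 1}"
  have N0: "N (\<lambda>r c. 0) = 0"
    using N blk_zero unfolding norm_on_def by blast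
  then have "0 \<le> C"
    using opt blk_zero by (force simp: C_def blk_inner_zero)
  have "0 \<in> A"
    unfolding A_def using N0 blk_zero blk_inner_zero by force
  have A_le: "a \<le> sqrt (2 * C)" if "a \<in> A" for a
  proof (cases "a \<le> 0")
    case True
    then show ?thesis using \<open>0 \<le> C\<close> by (meson order.trans real_sqrt_ge_zero zero_le_mult_iff zero_le_numeral)
  next
    case False
    from that obtain Z where Z: "a = blk_inner m n G Z" "Z \<in> blk m n" "N Z \<le> 1"
      unfolding A_def by blast
    have "N (\<lambda>r c. a * Z r c) = a * N Z" "0 \<le> N Z"
      using N Z(2) False unfolding norm_on_def by auto
    moreover have "blk_inner m n G (\<lambda>r c. a * Z r c) - (N (\<lambda>r c. a * Z r c))\<^sup>2 / 2 \<le> C"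
      using opt blk_scale[OF Z(2)] unfolding C_def by blast
    ultimately have "a * a - (a * N Z)\<^sup>2 / 2 \<le> C"
      using Z(1) by (simp add: blk_inner_scale)
    moreover have "(a * N Z)\<^sup>2 \<le> a\<^sup>2"
      using \<open>0 \<le> N Z\<close> Z(3) False by (simp add: power_mult_distrib power_le_one mult_left_le)
    ultimately have "a\<^sup>2 \<le> 2 * C" by (simp add: power2_eq_square)
    then show ?thesis by (rule real_le_rsqrt)
  qed
  have "0 \<le> Sup A" "Sup A \<le> sqrt (2 * C)"
    using \<open>0 \<in> A\<close> A_le by (auto intro!: cSup_upper cSup_least bdd_aboveI)
  then have "(Sup A)\<^sup>2 \<le> 2 * C"
    using \<open>0 \<le> C\<close> by (metis power_mono real_sqrt_pow2 zero_le_mult_iff zero_le_numeral)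
  then show ?thesis
    by (simp add: dual_norm_def A_def C_def)
qed

text \<open>For \<open>L = 0\<close> both sides vanish, because \<open>1 / 0 = 0\<close>: a block whose constant is zero is
  simply not moved.\<close>
lemma sharp_step_decrease:
  assumes N: "norm_on (blk m n) N" and s: "s \<in> blk m n"
    and opt: "\<forall>Z\<in>blk m n. blk_inner m n G Z - (N Z)\<^sup>2 / 2 \<le> blk_inner m n G s - (N s)\<^sup>2 / 2"
    and L: "0 \<le> L"
  shows "blk_inner m n G (\<lambda>r c. - (1 / L) * s r c) + L / 2 * (N (\<lambda>r c. - (1 / L) * s r c))\<^sup>2
       \<le> - (1 / (2 * L) * (dual_norm m n N G)\<^sup>2)"
proof -
  have "N (\<lambda>r c. - (1 / L) * s r c) = \<bar>- (1 / L)\<bar> * N s"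
    using N s unfolding norm_on_def by blast
  then have N_step: "N (\<lambda>r c. - (1 / L) * s r c) = 1 / L * N s"
    using L by simp
  have "blk_inner m n G (\<lambda>r c. - (1 / L) * s r c) + L / 2 * (N (\<lambda>r c. - (1 / L) * s r c))\<^sup>2
      = - (1 / L * (blk_inner m n G s - (N s)\<^sup>2 / 2))"
    unfolding blk_inner_scale N_step by (cases "L = 0") (simp_all add: power2_eq_square field_simps)
  also have "\<dots> \<le> - (1 / L * ((dual_norm m n N G)\<^sup>2 / 2))"
  proof -
    have "(dual_norm m n N G)\<^sup>2 / 2 \<le> blk_inner m n G s - (N s)\<^sup>2 / 2"
      using dual_norm_sq_le_sharp_value[OF N s opt] by simp
    then have "1 / L * ((dual_norm m n N G)\<^sup>2 / 2) \<le> 1 / L * (blk_inner m n G s - (N s)\<^sup>2 / 2)"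
      using L by (intro mult_left_mono) simp_all
    then show ?thesis
      by linarith
  qed
  finally show ?thesis by simp
qed

definition rcd_weight :: "(nat \<Rightarrow> nat set \<Rightarrow> real) \<Rightarrow> nat \<Rightarrow> nat set \<Rightarrow> real" where
  "rcd_weight L0 i S = (if i \<in> S then 1 / (2 * L0 i S) else 0)"

lemma rcd_iter_cong:
  "(\<And>j. j < k \<Longrightarrow> Ss j = Ss' j) \<Longrightarrow> rcd_iter g sh L X0 Ss k = rcd_iter g sh L X0 Ss' k"
  by (induction k) simp_all

locale rcd_assumptions =
  fixes b :: nat and m n :: "nat \<Rightarrow> nat" and N :: "nat \<Rightarrow> blockmat \<Rightarrow> real"
    and f :: "point \<Rightarrow> real" and grad :: "point \<Rightarrow> point"
    and D :: "nat set pmf" and L0 :: "nat \<Rightarrow> nat set \<Rightarrow> real"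
    and sharp :: "nat \<Rightarrow> blockmat \<Rightarrow> blockmat"
  assumes norms: "\<forall>i\<in>{1..b}. norm_on (blk (m i) (n i)) (N i)"
    and grad_in: "\<forall>X\<in>Xspace b m n. grad X \<in> Xspace b m n"
    and D_sub: "\<forall>S\<in>set_pmf D. S \<subseteq> {1..b}"
    and L0_nonneg: "\<forall>S\<in>set_pmf D. \<forall>i\<in>{1..b}. 0 \<le> L0 i S"
    and smooth: "\<forall>S\<in>set_pmf D. \<forall>X\<in>Xspace b m n. \<forall>\<Gamma>\<in>Xspace b m n.
        (\<forall>i\<in>{1..b}. i \<notin> S \<longrightarrow> \<Gamma> i = (\<lambda>r c. 0)) \<longrightarrow>
        f (X_add X \<Gamma>) - f X - X_inner b m n (grad X) \<Gamma>
          \<le> (\<Sum>i\<in>S. L0 i S / 2 * (N i (\<Gamma> i))\<^sup>2)"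
    and sharp: "\<forall>i\<in>{1..b}. \<forall>G\<in>blk (m i) (n i).
        sharp i G \<in> blk (m i) (n i) \<and>
        (\<forall>Z\<in>blk (m i) (n i). blk_inner (m i) (n i) G Z - (N i Z)\<^sup>2 / 2
           \<le> blk_inner (m i) (n i) G (sharp i G) - (N i (sharp i G))\<^sup>2 / 2)"
begin

abbreviation samples :: "nat \<Rightarrow> (nat \<Rightarrow> nat set) pmf" where
  "samples k \<equiv> Pi_pmf {..<k} {} (\<lambda>_. D)"

abbreviation iter :: "point \<Rightarrow> (nat \<Rightarrow> nat set) \<Rightarrow> nat \<Rightarrow> point" where
  "iter \<equiv> rcd_iter grad sharp L0"

lemma finite_set_pmf_D: "finite (set_pmf D)"
proof (rule finite_subset)
  show "set_pmf D \<subseteq> Pow {1..b}"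
    using D_sub by blast
qed simp

lemma finite_set_pmf_samples: "finite (set_pmf (samples k))"
  by (simp add: finite_set_Pi_pmf finite_set_pmf_D)

lemma grad_block_in_blk: "X \<in> Xspace b m n \<Longrightarrow> i \<in> {1..b} \<Longrightarrow> grad X i \<in> blk (m i) (n i)"
  using grad_in unfolding Xspace_def by blast

lemma rcd_step_in_Xspace:
  assumes X: "X \<in> Xspace b m n" and S: "S \<in> set_pmf D"
  shows "rcd_step grad sharp L0 S X \<in> Xspace b m n"
proof -
  have "sharp i (grad X i) \<in> blk (m i) (n i)" if "i \<in> {1..b}" for i
    using sharp grad_block_in_blk[OF X that] that by blast
  moreover have "S \<subseteq> {1..b}"
    using D_sub S by blast
  ultimately show ?thesis
    using X by (auto simp: Xspace_def blk_def rcd_step_def)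
qed

lemma iter_in_Xspace:
  assumes "X0 \<in> Xspace b m n" "Ss \<in> set_pmf (samples k)"
  shows "iter X0 Ss k \<in> Xspace b m n"
proof -
  have "\<forall>j<k. Ss j \<in> set_pmf D"
    using assms(2) by (auto intro: set_Pi_pmf_component)
  then show ?thesis
    using assms(1) by (induction k) (simp_all add: rcd_step_in_Xspace)
qed

lemma rcd_step_descent:
  assumes X: "X \<in> Xspace b m n" and S: "S \<in> set_pmf D"
  shows "f (rcd_step grad sharp L0 S X)
       \<le> f X - (\<Sum>i\<in>{1..b}. rcd_weight L0 i S * (dual_norm (m i) (n i) (N i) (grad X i))\<^sup>2)"
proof -
  define s where "s i = sharp i (grad X i)" for i
  define \<Gamma> where "\<Gamma> i = (if i \<in> S then (\<lambda>r c. - (1 / L0 i S) * s i r c) else (\<lambda>r c. 0))" for i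
  have S_sub: "S \<subseteq> {1..b}"
    using D_sub S by blast
  have s: "s i \<in> blk (m i) (n i)" if "i \<in> {1..b}" for i
    using sharp grad_block_in_blk[OF X that] that unfolding s_def by blast
  have "\<Gamma> \<in> Xspace b m n"
    using S_sub s by (auto simp: Xspace_def \<Gamma>_def blk_def)
  moreover have "X_add X \<Gamma> = rcd_step grad sharp L0 S X"
    by (auto simp: X_add_def rcd_step_def \<Gamma>_def s_def)
  ultimately have "f (rcd_step grad sharp L0 S X)
      \<le> f X + X_inner b m n (grad X) \<Gamma> + (\<Sum>i\<in>S. L0 i S / 2 * (N i (\<Gamma> i))\<^sup>2)"
    using smooth S X by (force simp: \<Gamma>_def)
  also have "\<dots> = f X + (\<Sum>i\<in>{1..b}. blk_inner (m i) (n i) (grad X i) (\<Gamma> i)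
      + (if i \<in> S then L0 i S / 2 * (N i (\<Gamma> i))\<^sup>2 else 0))"
    using S_sub by (simp add: X_inner_def sum.distrib sum.inter_restrict[symmetric] Int_absorb1)
  also have "\<dots> \<le> f X + (\<Sum>i\<in>{1..b}. - (rcd_weight L0 i S * (dual_norm (m i) (n i) (N i) (grad X i))\<^sup>2))"
  proof (intro add_left_mono sum_mono)
    fix i assume i: "i \<in> {1..b}"
    show "blk_inner (m i) (n i) (grad X i) (\<Gamma> i) + (if i \<in> S then L0 i S / 2 * (N i (\<Gamma> i))\<^sup>2 else 0)
        \<le> - (rcd_weight L0 i S * (dual_norm (m i) (n i) (N i) (grad X i))\<^sup>2)"
      using sharp_step_decrease[OF bspec[OF norms i] s[OF i], of "grad X i" "L0 i S"]
        sharp grad_block_in_blk[OF X i] L0_nonneg S i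
      by (auto simp: \<Gamma>_def s_def rcd_weight_def blk_inner_zero)
  qed
  finally show ?thesis
    by (simp add: sum_negf)
qed

lemma expected_descent:
  assumes "X0 \<in> Xspace b m n"
  shows "measure_pmf.expectation (samples (Suc k)) (\<lambda>Ss. f (iter X0 Ss (Suc k)))
       \<le> measure_pmf.expectation (samples k) (\<lambda>Ss. f (iter X0 Ss k))
         - (\<Sum>i\<in>{1..b}. measure_pmf.expectation D (rcd_weight L0 i)
             * measure_pmf.expectation (samples k) (\<lambda>Ss. (dual_norm (m i) (n i) (N i) (grad (iter X0 Ss k) i))\<^sup>2))"
    (is "_ \<le> _ - (\<Sum>i\<in>{1..b}. ?w i * measure_pmf.expectation _ (\<lambda>Ss. ?d i Ss))")
proof -
  have "iter X0 (Ss(k := y)) (Suc k) = rcd_step grad sharp L0 y (iter X0 Ss k)" for Ss y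
    using rcd_iter_cong[of k "Ss(k := y)" Ss] by simp
  then have "measure_pmf.expectation (samples (Suc k)) (\<lambda>Ss. f (iter X0 Ss (Suc k)))
      = measure_pmf.expectation (samples k)
          (\<lambda>Ss. measure_pmf.expectation D (\<lambda>y. f (rcd_step grad sharp L0 y (iter X0 Ss k))))"
    by (simp add: expectation_Pi_pmf_lessThan_Suc finite_set_pmf_D)
  also have "\<dots> \<le> measure_pmf.expectation (samples k)
      (\<lambda>Ss. measure_pmf.expectation D (\<lambda>y. f (iter X0 Ss k) - (\<Sum>i\<in>{1..b}. rcd_weight L0 i y * ?d i Ss)))"
    using rcd_step_descent iter_in_Xspace[OF assms]
    by (intro expectation_mono_finite finite_set_pmf_D finite_set_pmf_samples) auto
  also have "\<dots> = measure_pmf.expectation (samples k) (\<lambda>Ss. f (iter X0 Ss k) - (\<Sum>i\<in>{1..b}. ?w i * ?d i Ss))"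
    by (simp add: integrable_measure_pmf_finite[OF finite_set_pmf_D] integral_diff integral_sum)
  also have "\<dots> = measure_pmf.expectation (samples k) (\<lambda>Ss. f (iter X0 Ss k))
      - (\<Sum>i\<in>{1..b}. ?w i * measure_pmf.expectation (samples k) (\<lambda>Ss. ?d i Ss))"
    by (simp add: integrable_measure_pmf_finite[OF finite_set_pmf_samples] integral_diff integral_sum)
  finally show ?thesis .
qed

lemma expected_descent_sum:
  assumes X0: "X0 \<in> Xspace b m n" and lower: "\<forall>X\<in>Xspace b m n. fstar \<le> f X"
  shows "(\<Sum>k<K. \<Sum>i\<in>{1..b}. measure_pmf.expectation D (rcd_weight L0 i)
             * measure_pmf.expectation (samples k) (\<lambda>Ss. (dual_norm (m i) (n i) (N i) (grad (iter X0 Ss k) i))\<^sup>2))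
       \<le> f X0 - fstar"
    (is "(\<Sum>k<K. ?decrease k) \<le> _")
proof -
  define F where "F k = measure_pmf.expectation (samples k) (\<lambda>Ss. f (iter X0 Ss k))" for k
  have "?decrease k \<le> F k - F (Suc k)" for k
    using expected_descent[OF X0, of k] unfolding F_def by linarith
  then have "(\<Sum>k<K. ?decrease k) \<le> (\<Sum>k<K. F k - F (Suc k))"
    by (rule sum_mono)
  also have "\<dots> = F 0 - F K"
    by (rule sum_lessThan_telescope')
  also have "\<dots> \<le> f X0 - fstar"
    using expectation_mono_finite[OF finite_set_pmf_samples, of K "\<lambda>_. fstar"]
      lower iter_in_Xspace[OF X0] by (simp add: F_def)
  finally show ?thesis .
qed

lemma expected_rcd_weight_nonneg:
  "i \<in> {1..b} \<Longrightarrow> 0 \<le> measure_pmf.expectation D (rcd_weight L0 i)"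
  using expectation_mono_finite[OF finite_set_pmf_D, of "\<lambda>_. 0" "rcd_weight L0 i"] L0_nonneg
  by (simp add: rcd_weight_def)

end

theorem theorem5:
  fixes b :: nat and m n :: "nat \<Rightarrow> nat"
    and N :: "nat \<Rightarrow> blockmat \<Rightarrow> real"
    and f :: "point \<Rightarrow> real" and grad :: "point \<Rightarrow> point" and fstar :: real
    and D :: "nat set pmf" and L0 :: "nat \<Rightarrow> nat set \<Rightarrow> real"
    and sharp :: "nat \<Rightarrow> blockmat \<Rightarrow> blockmat"
    and X0 :: point and K :: nat
  assumes norms: "\<forall>i\<in>{1..b}. norm_on (blk (m i) (n i)) (N i)"
    and grad: "\<forall>X\<in>Xspace b m n. has_grad b m n f (grad X) X"
    and grad_cont: "continuous_grad b m n grad"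
    and lower: "\<forall>X\<in>Xspace b m n. fstar \<le> f X"
    and D_sub: "\<forall>S\<in>set_pmf D. S \<subseteq> {1..b}"
    and L0_nonneg: "\<forall>S\<in>set_pmf D. \<forall>i\<in>{1..b}. 0 \<le> L0 i S"
    and L0_zero: "\<forall>S\<in>set_pmf D. \<forall>i\<in>{1..b}. i \<notin> S \<longrightarrow> L0 i S = 0"
    and smooth: "\<forall>S\<in>set_pmf D. \<forall>X\<in>Xspace b m n. \<forall>\<Gamma>\<in>Xspace b m n.
        (\<forall>i\<in>{1..b}. i \<notin> S \<longrightarrow> \<Gamma> i = (\<lambda>r c. 0)) \<longrightarrow>
        f (X_add X \<Gamma>) - f X - X_inner b m n (grad X) \<Gamma>
          \<le> (\<Sum>i\<in>S. L0 i S / 2 * (N i (\<Gamma> i))\<^sup>2)"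
    and sharp: "\<forall>i\<in>{1..b}. \<forall>G\<in>blk (m i) (n i).
        sharp i G \<in> blk (m i) (n i) \<and>
        (\<forall>Z\<in>blk (m i) (n i). blk_inner (m i) (n i) G Z - (N i Z)\<^sup>2 / 2
           \<le> blk_inner (m i) (n i) G (sharp i G) - (N i (sharp i G))\<^sup>2 / 2)"
    and X0: "X0 \<in> Xspace b m n"
    and K: "1 \<le> K"
  shows "(let w = (\<lambda>i. measure_pmf.expectation D
                       (\<lambda>S. if i \<in> S then 1 / (2 * L0 i S) else 0));
              wbar = (1 / real b) * (\<Sum>j\<in>{1..b}. w j)
          in (1 / real K) * (\<Sum>k<K. \<Sum>i\<in>{1..b}. w i / wbar *
                measure_pmf.expectation (Pi_pmf {..<k} {} (\<lambda>_. D))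
                  (\<lambda>Ss. (dual_norm (m i) (n i) (N i) (grad (rcd_iter grad sharp L0 X0 Ss k) i))\<^sup>2))
             \<le> (f X0 - fstar) / (real K * wbar))"
proof -
  interpret rcd_assumptions b m n N f grad D L0 sharp
    using norms grad D_sub L0_nonneg smooth sharp by unfold_locales (auto simp: has_grad_def)
  define w where "w i = measure_pmf.expectation D (rcd_weight L0 i)" for i
  define wbar where "wbar = (1 / real b) * (\<Sum>j\<in>{1..b}. w j)"
  define E where "E i k = measure_pmf.expectation (samples k)
      (\<lambda>Ss. (dual_norm (m i) (n i) (N i) (grad (iter X0 Ss k) i))\<^sup>2)" for i k
  have "(\<Sum>k<K. \<Sum>i\<in>{1..b}. w i * E i k) \<le> f X0 - fstar"
    using expected_descent_sum[OF X0 lower] unfolding w_def E_def .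
  moreover have "0 \<le> real K * wbar"
    unfolding wbar_def w_def by (intro mult_nonneg_nonneg sum_nonneg expected_rcd_weight_nonneg) auto
  ultimately have "(\<Sum>k<K. \<Sum>i\<in>{1..b}. w i * E i k) / (real K * wbar) \<le> (f X0 - fstar) / (real K * wbar)"
    by (rule divide_right_mono)
  moreover have "(\<Sum>k<K. \<Sum>i\<in>{1..b}. w i * E i k) / (real K * wbar)
      = (1 / real K) * (\<Sum>k<K. \<Sum>i\<in>{1..b}. w i / wbar * E i k)"
    by (simp add: sum_divide_distrib mult.commute)
  ultimately show ?thesis
    unfolding Let_def w_def wbar_def E_def rcd_weight_def[abs_def] by simp
qed

end
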